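(* Let $H=(S_0,e_0,S_1,\dots)$ be a history sequence of the Simpler Lazy Set algorithm, let $S_i$ be a state of $H$, and let $a,b$ be active addresses of $S_i$ with $a\neq\mathsf T$ such that the path from $a$ to $\mathsf T$ in $S_i$ does not contain $b$. Then the path from $a$ to $\mathsf T$ in $S_{i+1}$ does not contain $b$. Consequently, for every $j>i$, $b$ is not on the path from $a$ to $\mathsf T$ in $S_j$.
   Context: Simpler Lazy Set algorithm. Fix a countably infinite set $A$ of addresses with distinguished $\mathsf H,\mathsf T$; $\mathrm{Number}=\mathbb N\cup\{-1,\infty\}$. A state $S$: set $\mathrm{Active}^S\subseteq A$, $\mathrm{Next}^S:\mathrm{Active}^S\setminus\{\mathsf T\}\to A$, $\mathrm{Val}^S:\mathrm{Active}^S\to\mathrm{Number}$, and for each process $p$: $PC_p\in\{0,1,2,3.1,\dots,3.5\}$, $x_p\in\mathbb N$, $\mathrm{curr}_p\in A$, $\mathrm{status}_p$. $S$ is normal if $\mathrm{Active}^S$ is finite, $\mathsf H,\mathsf T$ are active with values $-1,\infty$, other active addresses have values in $\mathbb N$, and for active $a\neq\mathsf T$, $\mathrm{Next}(a)$ is active with $\mathrm{Val}(a)<\mathrm{Val}(\mathrm{Next}(a))$. A path is a sequence $a_1,\dots,a_m$ ($m>1$) of active addresses with $\mathrm{Next}(a_i)=a_{i+1}$; in a normal state each active address $a\ne\mathsf T$ lies on a unique path from $a$ to $\mathsf T$; the main branch is the path from $\mathsf H$ to $\mathsf T$. Initial state: $\mathrm{Active}=\{\mathsf H,\mathsf T\}$,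 $\mathrm{Next}(\mathsf H)=\mathsf T$, all $PC_p=0$. Steps $(S,e,T)$ of a process $p$ on a normal $S$: (i) invocation: $PC_p$ from $0$ to $1$, $2$ or $3.1$, with $x_p\in\mathbb N$ arbitrary; (ii) failure: $PC_p$ from $1$ or $2$ to $0$ with $\chi(e)=f$, nothing else changes; (iii) $\mathrm{AD}(x)$ ($x=x_p$, $PC_p$ from $1$ to $0$): with $\mathfrak p$ the main-branch address having $\mathrm{Val}(\mathfrak p)<x\le\mathrm{Val}(\mathrm{Next}(\mathfrak p))$: if $\mathrm{Val}(\mathrm{Next}(\mathfrak p))=x$, no other change, $\chi(e)=1$; else a new address $a\notin\mathrm{Active}^S$ is made active with $\mathrm{Val}(a)=x$, $\mathrm{Next}^T(\mathfrak p)=a$, $\mathrm{Next}^T(a)=\mathrm{Next}^S(\mathfrak p)$, $\chi(e)=0$; (iv) $\mathrm{RM}(x)$ ($PC_p$ from $2$ to $0$): if the main branch has an address $cu$ of value $x$, with $pred$ its main-branch predecessor, set $\mathrm{Next}^T(pred)=\mathrm{Next}^S(cu)$, $\chi(e)=1$; else no change, $\chi(e)=0$; (v) CONTAINS$(x)$ lines, each an atomic step changing only $\mathrm{curr}_p,PC_p,\mathrm{status}_p$: 3.1 $\mathrm{curr}_p:=\mathsf H$; 3.2/3.3 $\mathrm{curr}_p:=\mathrm{Next}(\mathrm{curr}_p)$; 3.4 if $\mathrm{Val}(\mathrm{curr}_p)\ge x$ go to 3.5 else to 3.3; 3.5 return $1$ if $\mathrm{Val}(\mathrm{curr}_p)=x$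 else $0$, $PC_p:=0$. A history sequence is $(S_0,e_0,S_1,\dots)$ with $S_0$ the initial state and each $(S_i,e_i,S_{i+1})$ a step of some process. *)

theory Defs
  imports Main "HOL-Library.Countable" "HOL-Library.Extended_Nat"
begin

datatype num = NegOne | Fin nat | PInf

fun num_less :: "num \<Rightarrow> num \<Rightarrow> bool" where
  "num_less NegOne NegOne = False"
| "num_less NegOne _ = True"
| "num_less (Fin m) (Fin n) = (m < n)"
| "num_less (Fin _) NegOne = False"
| "num_less (Fin _) PInf = True"
| "num_less PInf _ = False"

definition num_le :: "num \<Rightarrow> num \<Rightarrow> bool" where
  "num_le u v \<longleftrightarrow> u = v \<or> num_less u v"

datatype pcv = PC0 | PC1 | PC2 | PC31 | PC32 | PC33 | PC34 | PC35

text \<open>A state. Next is only meaningful on Active - {T}, Val only on Active;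
  the step relations below only constrain them there.\<close>
record ('a, 'p) lstate =
  active :: "'a set"
  nxt    :: "'a \<Rightarrow> 'a"
  val    :: "'a \<Rightarrow> num"
  pc     :: "'p \<Rightarrow> pcv"
  xp     :: "'p \<Rightarrow> nat"
  curr   :: "'p \<Rightarrow> 'a"
  status :: "'p \<Rightarrow> nat"

datatype resp = RFail | R0 | R1 | RNone

datatype ekind = KInv | KFail | KAD | KRM | KLine pcv

datatype 'p event = Ev (ev_proc: 'p) (ev_kind: ekind) (ev_resp: resp)

definition normal :: "'a \<Rightarrow> 'a \<Rightarrow> ('a, 'p) lstate \<Rightarrow> bool" where
  "normal H T S \<longleftrightarrow>
     finite (active S) \<and> H \<in> active S \<and> T \<in> active S \<and>
     val S H = NegOne \<and> val S T = PInf \<and>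
     (\<forall>a \<in> active S - {H, T}. \<exists>n. val S a = Fin n) \<and>
     (\<forall>a \<in> active S - {T}. nxt S a \<in> active S \<and> num_less (val S a) (val S (nxt S a)))"

text \<open>A path: a sequence a_1,...,a_m (m > 1) of active addresses with Next(a_i) = a_(i+1)
  (so a_i \<noteq> T for i < m, since Next is defined only on Active - {T}).\<close>
definition is_path :: "'a \<Rightarrow> ('a, 'p) lstate \<Rightarrow> 'a list \<Rightarrow> bool" where
  "is_path T S xs \<longleftrightarrow> length xs > 1 \<and> set xs \<subseteq> active S \<and>
     (\<forall>i. Suc i < length xs \<longrightarrow> xs ! i \<noteq> T \<and> nxt S (xs ! i) = xs ! Suc i)"

definition on_path :: "'a \<Rightarrow> ('a, 'p) lstate \<Rightarrow> 'a \<Rightarrow> 'a \<Rightarrow> bool" where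
  "on_path T S a b \<longleftrightarrow> (\<exists>xs. is_path T S xs \<and> hd xs = a \<and> last xs = T \<and> b \<in> set xs)"

definition main_branch :: "'a \<Rightarrow> 'a \<Rightarrow> ('a, 'p) lstate \<Rightarrow> 'a \<Rightarrow> bool" where
  "main_branch H T S c \<longleftrightarrow> on_path T S H c"

definition same_shared :: "'a \<Rightarrow> ('a, 'p) lstate \<Rightarrow> ('a, 'p) lstate \<Rightarrow> bool" where
  "same_shared T S S' \<longleftrightarrow> active S' = active S \<and>
     (\<forall>c \<in> active S - {T}. nxt S' c = nxt S c) \<and>
     (\<forall>c \<in> active S. val S' c = val S c)"

definition others_same :: "'p \<Rightarrow> ('a, 'p) lstate \<Rightarrow> ('a, 'p) lstate \<Rightarrow> bool" where
  "others_same p S S' \<longleftrightarrow> (\<forall>q. q \<noteq> p \<longrightarrow>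
     pc S' q = pc S q \<and> xp S' q = xp S q \<and> curr S' q = curr S q \<and> status S' q = status S q)"

definition local_frame :: "'a \<Rightarrow> 'p \<Rightarrow> ('a, 'p) lstate \<Rightarrow> ('a, 'p) lstate \<Rightarrow> bool" where
  "local_frame T p S S' \<longleftrightarrow> same_shared T S S' \<and> others_same p S S' \<and> xp S' p = xp S p"

definition step_inv :: "'a \<Rightarrow> 'p \<Rightarrow> ('a, 'p) lstate \<Rightarrow> 'p event \<Rightarrow> ('a, 'p) lstate \<Rightarrow> bool" where
  "step_inv T p S e S' \<longleftrightarrow> e = Ev p KInv RNone \<and> pc S p = PC0 \<and>
     pc S' p \<in> {PC1, PC2, PC31} \<and> same_shared T S S' \<and> others_same p S S' \<and>
     curr S' p = curr S p \<and> status S' p = status S p"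

definition step_fail :: "'a \<Rightarrow> 'p \<Rightarrow> ('a, 'p) lstate \<Rightarrow> 'p event \<Rightarrow> ('a, 'p) lstate \<Rightarrow> bool" where
  "step_fail T p S e S' \<longleftrightarrow> e = Ev p KFail RFail \<and> pc S p \<in> {PC1, PC2} \<and> pc S' p = PC0 \<and>
     local_frame T p S S' \<and> curr S' p = curr S p \<and> status S' p = status S p"

definition step_ad :: "'a \<Rightarrow> 'a \<Rightarrow> 'p \<Rightarrow> ('a, 'p) lstate \<Rightarrow> 'p event \<Rightarrow> ('a, 'p) lstate \<Rightarrow> bool" where
  "step_ad H T p S e S' \<longleftrightarrow> pc S p = PC1 \<and> pc S' p = PC0 \<and>
     others_same p S S' \<and> xp S' p = xp S p \<and> curr S' p = curr S p \<and> status S' p = status S p \<and>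
     (\<exists>pp. main_branch H T S pp \<and> pp \<noteq> T \<and>
        num_less (val S pp) (Fin (xp S p)) \<and> num_le (Fin (xp S p)) (val S (nxt S pp)) \<and>
        (if val S (nxt S pp) = Fin (xp S p) then
           same_shared T S S' \<and> e = Ev p KAD R1
         else
           e = Ev p KAD R0 \<and>
           (\<exists>a. a \<notin> active S \<and> active S' = insert a (active S) \<and>
              val S' a = Fin (xp S p) \<and> (\<forall>c \<in> active S. val S' c = val S c) \<and>
              nxt S' pp = a \<and> nxt S' a = nxt S pp \<and>
              (\<forall>c \<in> active S - {T, pp}. nxt S' c = nxt S c))))"

definition step_rm :: "'a \<Rightarrow> 'a \<Rightarrow> 'p \<Rightarrow> ('a, 'p) lstate \<Rightarrow> 'p event \<Rightarrow> ('a, 'p) lstate \<Rightarrow> bool" where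
  "step_rm H T p S e S' \<longleftrightarrow> pc S p = PC2 \<and> pc S' p = PC0 \<and>
     others_same p S S' \<and> xp S' p = xp S p \<and> curr S' p = curr S p \<and> status S' p = status S p \<and>
     (if \<exists>cu. main_branch H T S cu \<and> val S cu = Fin (xp S p) then
        e = Ev p KRM R1 \<and>
        (\<exists>cu pred. main_branch H T S cu \<and> val S cu = Fin (xp S p) \<and>
           main_branch H T S pred \<and> pred \<noteq> T \<and> nxt S pred = cu \<and>
           active S' = active S \<and> (\<forall>c \<in> active S. val S' c = val S c) \<and>
           nxt S' pred = nxt S cu \<and> (\<forall>c \<in> active S - {T, pred}. nxt S' c = nxt S c))
      else e = Ev p KRM R0 \<and> same_shared T S S')"

definition step_contains :: "'a \<Rightarrow> 'a \<Rightarrow> 'p \<Rightarrow> ('a, 'p) lstate \<Rightarrow> 'p event \<Rightarrow> ('a, 'p) lstate \<Rightarrow> bool" where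
  "step_contains H T p S e S' \<longleftrightarrow> local_frame T p S S' \<and>
     ((pc S p = PC31 \<and> e = Ev p (KLine PC31) RNone \<and> curr S' p = H \<and> pc S' p = PC32 \<and>
         status S' p = status S p) \<or>
      (pc S p = PC32 \<and> e = Ev p (KLine PC32) RNone \<and> curr S' p = nxt S (curr S p) \<and>
         pc S' p = PC34 \<and> status S' p = status S p) \<or>
      (pc S p = PC33 \<and> e = Ev p (KLine PC33) RNone \<and> curr S' p = nxt S (curr S p) \<and>
         pc S' p = PC34 \<and> status S' p = status S p) \<or>
      (pc S p = PC34 \<and> e = Ev p (KLine PC34) RNone \<and> curr S' p = curr S p \<and>
         pc S' p = (if num_le (Fin (xp S p)) (val S (curr S p)) then PC35 else PC33) \<and>
         status S' p = status S p) \<or>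
      (pc S p = PC35 \<and> curr S' p = curr S p \<and> pc S' p = PC0 \<and>
         (if val S (curr S p) = Fin (xp S p)
          then status S' p = 1 \<and> e = Ev p (KLine PC35) R1
          else status S' p = 0 \<and> e = Ev p (KLine PC35) R0)))"

definition step :: "'a \<Rightarrow> 'a \<Rightarrow> ('a, 'p) lstate \<Rightarrow> 'p event \<Rightarrow> ('a, 'p) lstate \<Rightarrow> bool" where
  "step H T S e S' \<longleftrightarrow> normal H T S \<and> (\<exists>p.
     step_inv T p S e S' \<or> step_fail T p S e S' \<or> step_ad H T p S e S' \<or>
     step_rm H T p S e S' \<or> step_contains H T p S e S')"

definition initial :: "'a \<Rightarrow> 'a \<Rightarrow> ('a, 'p) lstate \<Rightarrow> bool" where
  "initial H T S \<longleftrightarrow> active S = {H, T} \<and> nxt S H = T \<and>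
     val S H = NegOne \<and> val S T = PInf \<and> (\<forall>p. pc S p = PC0)"

definition history :: "'a \<Rightarrow> 'a \<Rightarrow> (nat \<Rightarrow> ('a, 'p) lstate) \<Rightarrow> (nat \<Rightarrow> 'p event) \<Rightarrow> enat \<Rightarrow> bool" where
  "history H T S e N \<longleftrightarrow> initial H T (S 0) \<and>
     (\<forall>i. enat (Suc i) \<le> N \<longrightarrow> step H T (S i) (e i) (S (Suc i)))"

end

theory Submission
  imports Defs
begin

text \<open>
  Let \<open>next_rel T S\<close> be the successor graph of \<open>S\<close> on its active addresses, with no edge
  leaving \<open>T\<close>. Then \<open>b\<close> lies on the path from \<open>a\<close> to \<open>T\<close> iff \<open>a \<noteq> T\<close> and \<open>b\<close> lies between
  \<open>a\<close> and \<open>T\<close> in the reflexive-transitive closure of this graph. No step creates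
  reachability between addresses that were already active: an insertion splices a fresh
  address \<open>n\<close> into an edge \<open>p \<rightarrow> q\<close>, and contracting \<open>n\<close> onto \<open>p\<close> maps the new graph into
  the old one; a removal replaces \<open>p \<rightarrow> c \<rightarrow> q\<close> by the shortcut \<open>p \<rightarrow> q\<close>; every other step
  leaves the graph unchanged. As active addresses stay active, the claim propagates along
  the history.
\<close>

definition next_rel :: "'a \<Rightarrow> ('a, 'p) lstate \<Rightarrow> 'a rel" where
  "next_rel T S = {(x, y). x \<in> active S \<and> x \<noteq> T \<and> y \<in> active S \<and> nxt S x = y}"

lemma rtrancl_map:
  assumes "\<And>u v. (u, v) \<in> r \<Longrightarrow> (f u, f v) \<in> s\<^sup>*" and "(x, y) \<in> r\<^sup>*"
  shows "(f x, f y) \<in> s\<^sup>*"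
  using assms(2) by induction (auto intro: rtrancl_trans assms(1))

lemma rtrancl_insert_fresh_node:
  assumes "r' \<subseteq> r \<union> {(p, n), (n, q)}" and "(p, q) \<in> r" and "n \<notin> Field r"
    and "(x, y) \<in> r'\<^sup>*" and "x \<noteq> n" and "y \<noteq> n"
  shows "(x, y) \<in> r\<^sup>*"
proof -
  let ?f = "\<lambda>z. if z = n then p else z"
  have edge: "(?f u, ?f v) \<in> r\<^sup>*" if "(u, v) \<in> r'" for u v
    using that assms(1-3) by (auto intro: FieldI1 FieldI2)
  have "(?f x, ?f y) \<in> r\<^sup>*"
    by (rule rtrancl_map[OF edge assms(4)])
  then show ?thesis
    using assms(5,6) by simp
qed

lemma successively_rtrancl:
  "successively (\<lambda>u v. (u, v) \<in> r) (x # xs) \<Longrightarrow> y \<in> set (x # xs) \<Longrightarrow> (x, y) \<in> r\<^sup>*"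
  by (induction xs arbitrary: x) (auto simp: successively_Cons intro: converse_rtrancl_into_rtrancl)

lemma rtrancl_successively:
  "(x, y) \<in> r\<^sup>* \<Longrightarrow> \<exists>xs. successively (\<lambda>u v. (u, v) \<in> r) (x # xs) \<and> last (x # xs) = y"
proof (induction rule: converse_rtrancl_induct)
  case base
  show ?case by (intro exI[of _ "[]"]) simp
next
  case (step x z)
  then obtain xs where "successively (\<lambda>u v. (u, v) \<in> r) (z # xs)" "last (z # xs) = y"
    by blast
  with step(1) show ?case by (intro exI[of _ "z # xs"]) auto
qed

lemma is_path_iff_successively:
  "is_path T S xs \<longleftrightarrow> 1 < length xs \<and> successively (\<lambda>u v. (u, v) \<in> next_rel T S) xs"
proof
  assume "is_path T S xs"
  then show "1 < length xs \<and> successively (\<lambda>u v. (u, v) \<in> next_rel T S) xs"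
    by (auto simp: is_path_def next_rel_def successively_conv_nth intro!: subsetD[OF _ nth_mem])
next
  assume path: "1 < length xs \<and> successively (\<lambda>u v. (u, v) \<in> next_rel T S) xs"
  have "xs ! k \<in> active S" if "k < length xs" for k
  proof (cases "Suc k < length xs")
    case True
    then show ?thesis using path by (auto simp: next_rel_def dest: successively_nth)
  next
    case False
    then have "xs ! k = xs ! Suc (k - 1)" "Suc (k - 1) < length xs"
      using that path by (auto simp: Suc_pred)
    then show ?thesis using path by (auto simp: next_rel_def dest: successively_nth)
  qed
  then show "is_path T S xs"
    using path by (auto simp: is_path_def next_rel_def in_set_conv_nth successively_conv_nth)
qed

lemma on_path_iff_rtrancl:
  "on_path T S a b \<longleftrightarrow> a \<noteq> T \<and> (a, b) \<in> (next_rel T S)\<^sup>* \<and> (b, T) \<in> (next_rel T S)\<^sup>*"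
    (is "_ \<longleftrightarrow> _ \<and> (a, b) \<in> ?R\<^sup>* \<and> _")
proof
  assume "on_path T S a b"
  then obtain xs where xs: "1 < length xs" "successively (\<lambda>u v. (u, v) \<in> ?R) xs"
    "hd xs = a" "last xs = T" "b \<in> set xs"
    by (auto simp: on_path_def is_path_iff_successively)
  then obtain ys where ys: "xs = a # ys" "ys \<noteq> []"
    by (cases xs) auto
  have "(a, hd ys) \<in> ?R"
    using xs(2) ys by (simp add: successively_Cons)
  then have "a \<noteq> T"
    by (simp add: next_rel_def)
  moreover have "(a, b) \<in> ?R\<^sup>*"
    using successively_rtrancl xs(2,5) ys(1) by metis
  moreover have "(b, T) \<in> ?R\<^sup>*"
  proof -
    obtain us vs where "xs = us @ b # vs"
      using split_list xs(5) by metis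
    with xs(2,4) show ?thesis
      by (auto simp: successively_append_iff intro: successively_rtrancl)
  qed
  ultimately show "a \<noteq> T \<and> (a, b) \<in> ?R\<^sup>* \<and> (b, T) \<in> ?R\<^sup>*"
    by blast
next
  assume reach: "a \<noteq> T \<and> (a, b) \<in> ?R\<^sup>* \<and> (b, T) \<in> ?R\<^sup>*"
  then obtain us vs where
    us: "successively (\<lambda>u v. (u, v) \<in> ?R) (a # us)" "last (a # us) = b" and
    vs: "successively (\<lambda>u v. (u, v) \<in> ?R) (b # vs)" "last (b # vs) = T"
    using rtrancl_successively by metis
  let ?xs = "(a # us) @ vs"
  have "successively (\<lambda>u v. (u, v) \<in> ?R) ?xs"
    unfolding successively_append_iff using us vs(1) by (auto simp: successively_Cons)
  moreover have "last ?xs = T"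
    unfolding last_append using us(2) vs(2) by (cases vs) auto
  moreover have "b \<in> set ?xs"
    using us(2) last_in_set[of "a # us"] by auto
  moreover have "1 < length ?xs"
    using reach \<open>last ?xs = T\<close> by (cases "us @ vs") auto
  ultimately show "on_path T S a b"
    unfolding on_path_def is_path_iff_successively by (intro exI[of _ ?xs]) simp
qed

lemma on_path_active: "on_path T S a b \<Longrightarrow> b \<in> active S"
  by (auto simp: on_path_def is_path_def)

lemma next_rel_same_shared: "same_shared T S S' \<Longrightarrow> next_rel T S' = next_rel T S"
  by (auto simp: same_shared_def next_rel_def)

lemma step_cases:
  assumes "step H T S e S'"
  obtains (same) "same_shared T S S'"
  | (insert) pp n where "main_branch H T S pp" "pp \<noteq> T" "n \<notin> active S"
      "active S' = insert n (active S)" "nxt S' pp = n" "nxt S' n = nxt S pp"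
      "\<forall>c \<in> active S - {T, pp}. nxt S' c = nxt S c"
  | (unlink) pred cu where "main_branch H T S pred" "pred \<noteq> T" "main_branch H T S cu" "cu \<noteq> T"
      "nxt S pred = cu" "active S' = active S" "nxt S' pred = nxt S cu"
      "\<forall>c \<in> active S - {T, pred}. nxt S' c = nxt S c"
proof -
  from assms obtain p where
    "step_inv T p S e S' \<or> step_fail T p S e S' \<or> step_contains H T p S e S' \<or>
     step_ad H T p S e S' \<or> step_rm H T p S e S'"
    by (auto simp: step_def)
  then show ?thesis
  proof (elim disjE)
    assume "step_ad H T p S e S'"
    then show ?thesis
      unfolding step_ad_def using same insert by (auto split: if_splits)
  next
    assume rm: "step_rm H T p S e S'"
    show ?thesis
    proof (cases "\<exists>cu. main_branch H T S cu \<and> val S cu = Fin (xp S p)")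
      case True
      then obtain pred cu where "main_branch H T S pred" "pred \<noteq> T" "main_branch H T S cu"
        "val S cu = Fin (xp S p)" "nxt S pred = cu" "active S' = active S" "nxt S' pred = nxt S cu"
        "\<forall>c \<in> active S - {T, pred}. nxt S' c = nxt S c"
        using rm unfolding step_rm_def by auto
      moreover have "cu \<noteq> T"
        using assms \<open>val S cu = Fin (xp S p)\<close> by (auto simp: step_def normal_def)
      ultimately show ?thesis
        using unlink by blast
    next
      case False
      then show ?thesis
        using rm same by (simp add: step_rm_def)
    qed
  qed (use same in \<open>auto simp: step_inv_def step_fail_def step_contains_def local_frame_def\<close>)
qed

lemma step_active_mono: "step H T S e S' \<Longrightarrow> active S \<subseteq> active S'"
  by (cases rule: step_cases) (auto simp: same_shared_def)

lemma rtrancl_next_rel_step: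
  assumes "step H T S e S'" and "x \<in> active S" and "y \<in> active S"
    and "(x, y) \<in> (next_rel T S')\<^sup>*"
  shows "(x, y) \<in> (next_rel T S)\<^sup>*"
proof -
  have nxt_active: "\<And>c. c \<in> active S \<Longrightarrow> c \<noteq> T \<Longrightarrow> nxt S c \<in> active S"
    using assms(1) by (simp add: step_def normal_def)
  from assms(1) show ?thesis
  proof (cases rule: step_cases)
    case same
    with assms(4) show ?thesis
      by (simp add: next_rel_same_shared)
  next
    case (insert pp n)
    have "pp \<in> active S"
      using insert(1) by (simp add: main_branch_def on_path_active)
    have "(u, v) \<in> next_rel T S \<union> {(pp, n), (n, nxt S pp)}" if "(u, v) \<in> next_rel T S'" for u v
    proof -
      have u: "u \<in> insert n (active S)" "u \<noteq> T" "v = nxt S' u"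
        using that insert(4) by (auto simp: next_rel_def)
      then consider "u = pp" | "u = n" | "u \<in> active S - {T, pp}"
        by blast
      then show ?thesis
      proof cases
        case 3
        with u insert(7) nxt_active show ?thesis
          by (simp add: next_rel_def)
      qed (use u insert(5,6) in simp_all)
    qed
    then have sub: "next_rel T S' \<subseteq> next_rel T S \<union> {(pp, n), (n, nxt S pp)}"
      by (simp add: subrelI)
    have edge: "(pp, nxt S pp) \<in> next_rel T S"
      using \<open>pp \<in> active S\<close> insert(2) nxt_active by (simp add: next_rel_def)
    have fresh: "n \<notin> Field (next_rel T S)"
      using insert(3) by (auto simp: next_rel_def Field_def)
    show ?thesis
      using rtrancl_insert_fresh_node[OF sub edge fresh assms(4)] assms(2,3) insert(3) by blast
  next
    case (unlink pred cu)
    have "(pred, cu) \<in> next_rel T S" "(cu, nxt S cu) \<in> next_rel T S"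
      using unlink(1-5) nxt_active by (auto simp: next_rel_def main_branch_def on_path_active)
    then have bypass: "(pred, nxt S cu) \<in> (next_rel T S)\<^sup>*"
      by (meson r_into_rtrancl rtrancl_into_rtrancl)
    have "(u, v) \<in> (next_rel T S)\<^sup>*" if "(u, v) \<in> next_rel T S'" for u v
      using that unlink(6-8) bypass by (cases "u = pred") (auto simp: next_rel_def)
    then have "next_rel T S' \<subseteq> (next_rel T S)\<^sup>*"
      by auto
    with assms(4) show ?thesis
      using rtrancl_subset_rtrancl by blast
  qed
qed

lemma on_path_step_backward:
  assumes "step H T S e S'" and "a \<in> active S" and "b \<in> active S" and "on_path T S' a b"
  shows "on_path T S a b"
proof -
  have "T \<in> active S"
    using assms(1) by (simp add: step_def normal_def)
  moreover have "a \<noteq> T" "(a, b) \<in> (next_rel T S')\<^sup>*" "(b, T) \<in> (next_rel T S')\<^sup>*"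
    using assms(4) by (simp_all add: on_path_iff_rtrancl)
  ultimately show ?thesis
    using rtrancl_next_rel_step[OF assms(1)] assms(2,3) by (simp add: on_path_iff_rtrancl)
qed

lemma history_step:
  "history H T S e N \<Longrightarrow> enat (Suc j) \<le> N \<Longrightarrow> step H T (S j) (e j) (S (Suc j))"
  by (simp add: history_def)

lemma enat_Suc_leD: "enat (Suc j) \<le> N \<Longrightarrow> enat j \<le> N"
  using order.trans[of "enat j" "enat (Suc j)" N] by simp

lemma history_active_mono:
  assumes "history H T S e N" and "i \<le> j" and "enat j \<le> N"
  shows "active (S i) \<subseteq> active (S j)"
  using assms(2,3)
proof (induction j rule: dec_induct)
  case (step j)
  then have "active (S i) \<subseteq> active (S j)"
    by (simp add: enat_Suc_leD)
  also have "\<dots> \<subseteq> active (S (Suc j))"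
    using step_active_mono history_step[OF assms(1) step.prems] .
  finally show ?case .
qed simp

lemma history_not_on_path:
  assumes "history H T S e N" and "i \<le> j" and "enat j \<le> N"
    and "a \<in> active (S i)" and "b \<in> active (S i)" and "\<not> on_path T (S i) a b"
  shows "\<not> on_path T (S j) a b"
  using assms(2,3)
proof (induction j rule: dec_induct)
  case (step j)
  have "enat j \<le> N"
    using step.prems by (rule enat_Suc_leD)
  then have "a \<in> active (S j)" "b \<in> active (S j)" "\<not> on_path T (S j) a b"
    using step history_active_mono[OF assms(1)] assms(4,5) by auto
  with on_path_step_backward[OF history_step[OF assms(1) step.prems]] show ?case
    by blast
qed (use assms(6) in simp)

theorem lemma4p12:
  fixes H T :: "'a::countable" and S :: "nat \<Rightarrow> ('a, 'p) lstate"
    and e :: "nat \<Rightarrow> 'p event" and N :: enat and i :: nat and a b :: 'a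
  assumes "infinite (UNIV :: 'a set)" and "H \<noteq> T"
    and "history H T S e N" and "enat i \<le> N"
    and "a \<in> active (S i)" and "b \<in> active (S i)" and "a \<noteq> T"
    and "\<not> on_path T (S i) a b"
  shows "(enat (Suc i) \<le> N \<longrightarrow> \<not> on_path T (S (Suc i)) a b) \<and>
         (\<forall>j. i < j \<and> enat j \<le> N \<longrightarrow> \<not> on_path T (S j) a b)"
proof (intro conjI allI impI)
  assume "enat (Suc i) \<le> N"
  then show "\<not> on_path T (S (Suc i)) a b"
    by (intro history_not_on_path[OF assms(3) _ _ assms(5,6,8)]) simp_all
next
  fix j
  assume "i < j \<and> enat j \<le> N"
  then show "\<not> on_path T (S j) a b"
    by (intro history_not_on_path[OF assms(3) _ _ assms(5,6,8)]) simp_all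
qed

end
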